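(* Let $\mathcal{G}=\{G_1,\ldots,G_m\}$ be a consecutive grouped weight partition of $\mathbb{F}_q^k$, with $G_j=\bigcup_{i\in S_j}W_i$ where each $S_j=\{a_j,a_j+1,\ldots,b_j\}$ is an integer interval, the $S_j$ partition $\{0,\ldots,k\}$, and the blocks are ordered so that $\max S_r<\min S_s$ whenever $r<s$. If $|S_\ell|\ge 2$ for some $\ell\in\{2,\ldots,m-1\}$, then the partition graph of $\mathcal{G}$ contains no clique of size $m$.
   Context: $W_i=\{u\in\mathbb{F}_q^k:\mathrm{wt}(u)=i\}$ (Hamming weight). $d$ is Hamming distance; for distinct blocks $d(P,P')=\min_{u\in P,v\in P'}d(u,v)$. The partition graph $G_{\mathcal{P}}$ of a partition $\mathcal{P}$ of $\mathbb{F}_q^k$ has vertex set $\mathbb{F}_q^k$, and vertices $u\in P$, $v\in P'$ (blocks of $\mathcal{P}$) are adjacent iff $P\ne P'$ and $d(u,v)=d(P,P')$. *)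

theory Defs
  imports "HOL-Analysis.Analysis"
begin

text \<open>Vectors of F_q^k are modelled as elements of type 'a ^ 'n, where 'a is a finite
field (F_q) and k = CARD('n).\<close>

definition hweight :: "'a::zero ^ 'n::finite \<Rightarrow> nat" where
  "hweight u = card {i. u $ i \<noteq> 0}"

definition hdist :: "'a ^ 'n::finite \<Rightarrow> 'a ^ 'n \<Rightarrow> nat" where
  "hdist u v = card {i. u $ i \<noteq> v $ i}"

definition weight_class :: "nat \<Rightarrow> ('a::zero ^ 'n::finite) set" where
  "weight_class i = {u. hweight u = i}"

definition block_dist :: "('a ^ 'n::finite) set \<Rightarrow> ('a ^ 'n) set \<Rightarrow> nat" where
  "block_dist P P' = Min {hdist u v | u v. u \<in> P \<and> v \<in> P'}"

definition partition_graph_adj ::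
  "('a ^ 'n::finite) set set \<Rightarrow> 'a ^ 'n \<Rightarrow> 'a ^ 'n \<Rightarrow> bool" where
  "partition_graph_adj \<P> u v \<longleftrightarrow>
     (\<exists>P\<in>\<P>. \<exists>P'\<in>\<P>. P \<noteq> P' \<and> u \<in> P \<and> v \<in> P' \<and> hdist u v = block_dist P P')"

definition is_clique :: "('v \<Rightarrow> 'v \<Rightarrow> bool) \<Rightarrow> 'v set \<Rightarrow> bool" where
  "is_clique E C \<longleftrightarrow> (\<forall>u\<in>C. \<forall>v\<in>C. u \<noteq> v \<longrightarrow> E u v)"

end

theory Submission
  imports Defs
begin

text \<open>An edge of the partition graph between blocks with weight ranges [a_j, b_j] and
[a_j', b_j'], j < j', has length at least a_j' - b_j, since the weight changes by at most
the distance; vectors with nested supports show that a_j' - b_j is the block distance.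
Hence such an edge joins a vector of weight b_j to one of weight a_j'. A clique of size m
meets every block, so the vertex in block l is joined both to block 1 and to block m, and
its weight is a_l = b_l, contradicting |S_l| \<ge> 2.\<close>

lemma hweight_le_add_hdist: "hweight v \<le> hweight u + hdist u v"
proof -
  have "{i. v $ i \<noteq> 0} \<subseteq> {i. u $ i \<noteq> 0} \<union> {i. u $ i \<noteq> v $ i}"
    by auto
  then have "card {i. v $ i \<noteq> 0} \<le> card ({i. u $ i \<noteq> 0} \<union> {i. u $ i \<noteq> v $ i})"
    by (intro card_mono) auto
  also have "\<dots> \<le> card {i. u $ i \<noteq> 0} + card {i. u $ i \<noteq> v $ i}"
    by (rule card_Un_le)
  finally show ?thesis
    unfolding hweight_def hdist_def .
qed

lemma ex_hweight_hdist:
  assumes "w \<le> w'" "w' \<le> CARD('n::finite)"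
  obtains x y :: "'a::zero_neq_one ^ 'n"
  where "hweight x = w" "hweight y = w'" "hdist x y = w' - w"
proof -
  obtain S :: "'n set" where S: "card S = w'"
    using obtain_subset_with_card_n[of w' "UNIV :: 'n set"] assms by auto
  obtain T where T: "T \<subseteq> S" "card T = w"
    using obtain_subset_with_card_n[of w S] S assms by auto
  define x :: "'a ^ 'n" where "x = (\<chi> i. if i \<in> T then 1 else 0)"
  define y :: "'a ^ 'n" where "y = (\<chi> i. if i \<in> S then 1 else 0)"
  have "{i. x $ i \<noteq> 0} = T" "{i. y $ i \<noteq> 0} = S" "{i. x $ i \<noteq> y $ i} = S - T"
    using T by (auto simp: x_def y_def)
  then show ?thesis
    using that[of x y] S T by (simp add: hweight_def hdist_def card_Diff_subset)
qed

lemma block_dist_le: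
  fixes u v :: "'a ^ 'n::finite"
  assumes "u \<in> P" "v \<in> P'"
  shows "block_dist P P' \<le> hdist u v"
proof -
  have "{hdist u v | u v. u \<in> P \<and> v \<in> P'} \<subseteq> {..CARD('n)}"
    by (auto simp: hdist_def card_mono)
  then have "finite {hdist u v | u v. u \<in> P \<and> v \<in> P'}"
    using finite_subset by blast
  then show ?thesis
    unfolding block_dist_def using assms by (intro Min_le) auto
qed

lemma UN_weight_class: "(\<Union>i\<in>I. weight_class i) = {u. hweight u \<in> I}"
  by (auto simp: weight_class_def)

text \<open>The annotation on the first block is essential: the type of block_dist's arguments is
not tied to that of hdist's.\<close>

lemma partition_graph_edge_between_weight_ranges:
  fixes u v :: "'a::zero_neq_one ^ 'n::finite"
  assumes "b < a'" "a' \<le> CARD('n)"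
    and "hweight u \<in> {a..b}" "hweight v \<in> {a'..b'}"
    and "hdist u v = block_dist {x :: 'a ^ 'n. hweight x \<in> {a..b}} {y. hweight y \<in> {a'..b'}}"
  shows "hweight u = b \<and> hweight v = a'"
proof -
  obtain x y :: "'a ^ 'n" where xy: "hweight x = b" "hweight y = a'" "hdist x y = a' - b"
    using ex_hweight_hdist[OF less_imp_le[OF assms(1)] assms(2)] by blast
  have "x \<in> {x. hweight x \<in> {a..b}}" "y \<in> {y. hweight y \<in> {a'..b'}}"
    using xy assms(3,4) by auto
  then have "block_dist {x :: 'a ^ 'n. hweight x \<in> {a..b}} {y. hweight y \<in> {a'..b'}} \<le> hdist x y"
    by (rule block_dist_le)
  then have "hdist u v \<le> a' - b"
    using assms(5) xy(3) by simp
  moreover have "hweight v \<le> hweight u + hdist u v"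
    by (rule hweight_le_add_hdist)
  ultimately show ?thesis
    using assms(1,3,4) by auto
qed

lemma clique_meets_every_block:
  assumes "disjoint \<P>" "finite \<P>" "is_clique (partition_graph_adj \<P>) C"
    and "card \<P> \<le> card C" "2 \<le> card C" "P \<in> \<P>"
  shows "\<exists>u\<in>C. u \<in> P"
proof -
  have adj: "\<exists>Q\<in>\<P>. \<exists>Q'\<in>\<P>. Q \<noteq> Q' \<and> u \<in> Q \<and> v \<in> Q'"
    if "u \<in> C" "v \<in> C" "u \<noteq> v" for u v
    using assms(3) that unfolding is_clique_def partition_graph_adj_def by blast
  have covered: "\<exists>Q. Q \<in> \<P> \<and> u \<in> Q" if u: "u \<in> C" for u
  proof -
    have "C \<noteq> {u}"
      using assms(5) by auto
    then obtain v where "v \<in> C" "v \<noteq> u"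
      using u by blast
    then show ?thesis
      using adj[of u v] u by blast
  qed
  define block where "block u = (SOME Q. Q \<in> \<P> \<and> u \<in> Q)" for u
  have block: "block u \<in> \<P> \<and> u \<in> block u" if "u \<in> C" for u
    unfolding block_def using covered[OF that] by (rule someI_ex)
  have block_eq: "block u = Q" if "u \<in> C" "Q \<in> \<P>" "u \<in> Q" for u Q
    using disjointD[OF assms(1)] block[OF that(1)] that by blast
  have "inj_on block C"
  proof (rule inj_onI, rule ccontr)
    fix u v assume uv: "u \<in> C" "v \<in> C" "block u = block v" "u \<noteq> v"
    then obtain Q Q' where "Q \<in> \<P>" "Q' \<in> \<P>" "Q \<noteq> Q'" "u \<in> Q" "v \<in> Q'"
      using adj[OF uv(1,2,4)] by blast
    then show False
      using uv block_eq[of u Q] block_eq[of v Q'] by simp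
  qed
  moreover have "block ` C \<subseteq> \<P>"
    using block by blast
  ultimately have "block ` C = \<P>"
    using card_seteq[OF assms(2)] assms(4) by (simp add: card_image)
  then show ?thesis
    using assms(6) block by blast
qed

locale consecutive_intervals =
  fixes a b :: "nat \<Rightarrow> nat" and m :: nat
  assumes interval_nonempty: "\<And>j. j \<in> {1..m} \<Longrightarrow> a j \<le> b j"
    and interval_next: "\<And>j. j \<in> {1..<m} \<Longrightarrow> a (Suc j) = Suc (b j)"
begin

lemma upper_less_lower:
  assumes "1 \<le> j" "j < j'" "j' \<le> m"
  shows "b j < a j'"
  using assms(2,3)
proof (induction j')
  case 0
  then show ?case
    by simp
next
  case (Suc n)
  show ?case
  proof (cases "j = n")
    case True
    then show ?thesis
      using interval_next[of j] assms(1) Suc.prems by simp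
  next
    case False
    then have "b j < a n" "a n \<le> b n" "a (Suc n) = Suc (b n)"
      using Suc interval_nonempty[of n] interval_next[of n] assms(1) by auto
    then show ?thesis
      by simp
  qed
qed

lemma interval_unique:
  assumes "j \<in> {1..m}" "j' \<in> {1..m}" "w \<in> {a j..b j}" "w \<in> {a j'..b j'}"
  shows "j = j'"
  using assms upper_less_lower[of j j'] upper_less_lower[of j' j]
  by (cases j j' rule: linorder_cases) auto

lemma disjoint_weight_blocks:
  "disjoint ((\<lambda>j. {u :: 'a::zero ^ 'n::finite. hweight u \<in> {a j..b j}}) ` {1..m})"
  using interval_unique
  by (intro disjoint_family_on_disjoint_image) (auto simp: disjoint_family_on_def)

lemma clique_meets_every_weight_range:
  fixes C :: "('a::zero ^ 'n::finite) set"
  assumes "is_clique (partition_graph_adj ((\<lambda>j. {u. hweight u \<in> {a j..b j}}) ` {1..m})) C"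
    and "card C = m" "2 \<le> m" "j \<in> {1..m}"
  shows "\<exists>u\<in>C. hweight u \<in> {a j..b j}"
proof -
  have "card ((\<lambda>j. {u :: 'a ^ 'n. hweight u \<in> {a j..b j}}) ` {1..m}) \<le> card C"
    using card_image_le[of "{1..m}"] assms(2) by simp
  then show ?thesis
    using clique_meets_every_block[OF disjoint_weight_blocks _ assms(1)] assms(2-4) by blast
qed

lemma partition_graph_adj_weights:
  fixes u v :: "'a::zero_neq_one ^ 'n::finite"
  assumes "b m \<le> CARD('n)"
    and "partition_graph_adj ((\<lambda>j. {u. hweight u \<in> {a j..b j}}) ` {1..m}) u v"
    and "j \<in> {1..m}" "j' \<in> {1..m}" "j < j'"
    and "hweight u \<in> {a j..b j}" "hweight v \<in> {a j'..b j'}"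
  shows "hweight u = b j \<and> hweight v = a j'"
proof -
  obtain i i' where i: "i \<in> {1..m}" "i' \<in> {1..m}" "hweight u \<in> {a i..b i}"
      "hweight v \<in> {a i'..b i'}"
      "hdist u v = block_dist {x :: 'a ^ 'n. hweight x \<in> {a i..b i}} {y. hweight y \<in> {a i'..b i'}}"
    using assms(2) unfolding partition_graph_adj_def by blast
  have "i = j" "i' = j'"
    using interval_unique assms(3,4,6,7) i by blast+
  with i have dist: "hdist u v = block_dist {x :: 'a ^ 'n. hweight x \<in> {a j..b j}}
      {y. hweight y \<in> {a j'..b j'}}"
    by simp
  have "b j' \<le> b m"
    using upper_less_lower[of j' m] interval_nonempty[of m] assms(4)
    by (cases "j' = m") auto
  then have "a j' \<le> CARD('n)"
    using interval_nonempty[of j'] assms(1,4) by auto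
  moreover have "b j < a j'"
    using upper_less_lower[of j j'] assms(3-5) by auto
  ultimately show ?thesis
    using partition_graph_edge_between_weight_ranges[OF _ _ assms(6,7) dist] by blast
qed

end

theorem lemma9:
  fixes a b :: "nat \<Rightarrow> nat" and m l :: nat
  assumes "m \<ge> 1"
    and "\<And>j. j \<in> {1..m} \<Longrightarrow> a j \<le> b j"
    and "a 1 = 0"
    and "b m = CARD('n::finite)"
    and "\<And>j. j \<in> {1..<m} \<Longrightarrow> a (Suc j) = Suc (b j)"
    and "l \<in> {2..m-1}"
    and "card {a l..b l} \<ge> 2"
  shows "\<not> (\<exists>C :: ('a::{finite,field} ^ 'n) set. card C = m \<and>
            is_clique (partition_graph_adj
               ((\<lambda>j. \<Union>i\<in>{a j..b j}. weight_class i) ` {1..m})) C)"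
proof
  interpret consecutive_intervals a b m
    using assms(2,5) by unfold_locales
  let ?\<P> = "(\<lambda>j. {u :: 'a ^ 'n. hweight u \<in> {a j..b j}}) ` {1..m}"
  assume "\<exists>C :: ('a ^ 'n) set. card C = m \<and> is_clique (partition_graph_adj
            ((\<lambda>j. \<Union>i\<in>{a j..b j}. weight_class i) ` {1..m})) C"
  then obtain C where C: "card C = m" "is_clique (partition_graph_adj ?\<P>) C"
    by (auto simp: UN_weight_class)
  have l: "1 < l" "l < m"
    using assms(6) by auto
  have block_vertex: "\<exists>u\<in>C. hweight u \<in> {a j..b j}" if "j \<in> {1..m}" for j
    using clique_meets_every_weight_range[OF C(2,1) _ that] l by simp
  obtain u1 ul um where u: "u1 \<in> C" "ul \<in> C" "um \<in> C"
    and w: "hweight u1 \<in> {a 1..b 1}" "hweight ul \<in> {a l..b l}" "hweight um \<in> {a m..b m}"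
    using block_vertex[of 1] block_vertex[of l] block_vertex[of m] l by force
  have "u1 \<noteq> ul" "ul \<noteq> um"
    using w l interval_unique[of 1 l] interval_unique[of l m] by auto
  then have "partition_graph_adj ?\<P> u1 ul" "partition_graph_adj ?\<P> ul um"
    using C(2) u unfolding is_clique_def by blast+
  then have "hweight ul = a l" "hweight ul = b l"
    using partition_graph_adj_weights[where j = 1 and j' = l]
      partition_graph_adj_weights[where j = l and j' = m] w l assms(4)
    by auto
  then show False
    using assms(7) by simp
qed

end
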